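(* Let $m>0$, $R>m/2$, and $\lambda\le 0$. Using Euclidean polar coordinates $(r,\theta)$ on the annulus $\{m/2\le r\le R\}$ in the plane, suppose $u=u(r,\theta)$ is a smooth solution of $$u_{rr}+\frac{u_r}{r}+\frac{u_{\theta\theta}}{r^2}+\frac{m}{r^3}\Big(1+\frac{m}{2r}\Big)^{-2}u+\lambda\Big(1+\frac{m}{2r}\Big)^4u=0$$ with $u_r=0$ on $r=m/2$ and $u=0$ on $r=R$. Then (a) $u$ is radial, i.e. $u=u(r)$; and (b) the space of such solutions has dimension at most one, i.e. each non-positive eigenvalue of this problem has multiplicity one.
   Context: This equation with these boundary conditions is the eigenvalue equation $L_{\Sigma_0}u+\lambda e^{2\varphi}u=0$ (written in Euclidean terms) for the Jacobi operator of the plane $\Sigma_0=\{x_3=0\}$ in the Schwarzschild manifold $M=\{|x|\ge m/2\}$, $g=e^{2\varphi}\delta$, $e^{2\varphi}=(1+\frac{m}{2|x|})^4$, restricted to $\{|x|\le R\}$, with Dirichlet condition on $|x|=R$ and the free-boundary (Neumann) condition on the horizon $|x|=m/2$. *)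

theory Defs
  imports "HOL-Analysis.Analysis"
begin

text \<open>Functions of the polar coordinates (r, theta) are modelled as maps real \<times> real \<Rightarrow> real,
  with first component r and second component theta.\<close>

definition D1 :: "(real \<times> real \<Rightarrow> real) \<Rightarrow> real \<times> real \<Rightarrow> real" where
  "D1 f p = deriv (\<lambda>t. f (t, snd p)) (fst p)"

definition D2 :: "(real \<times> real \<Rightarrow> real) \<Rightarrow> real \<times> real \<Rightarrow> real" where
  "D2 f p = deriv (\<lambda>t. f (fst p, t)) (snd p)"

fun Ck_on :: "nat \<Rightarrow> (real \<times> real) set \<Rightarrow> (real \<times> real \<Rightarrow> real) \<Rightarrow> bool" where
  "Ck_on 0 S f = continuous_on S f"
| "Ck_on (Suc n) S f =
     (continuous_on S f \<and> (\<forall>p\<in>S. f differentiable (at p)) \<and>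
      Ck_on n S (D1 f) \<and> Ck_on n S (D2 f))"

definition smooth_on :: "(real \<times> real) set \<Rightarrow> (real \<times> real \<Rightarrow> real) \<Rightarrow> bool" where
  "smooth_on S f \<longleftrightarrow> (\<forall>n. Ck_on n S f)"

definition annulus_polar :: "real \<Rightarrow> real \<Rightarrow> (real \<times> real) set" where
  "annulus_polar m R = {p. m / 2 \<le> fst p \<and> fst p \<le> R}"

text \<open>u is a smooth solution (in polar coordinates) of the eigenvalue problem:
  smooth up to the boundary (i.e. smooth on an open neighbourhood of the closed annulus),
  2 pi-periodic in theta, satisfying the PDE, the Neumann condition at r = m/2 and the
  Dirichlet condition at r = R.\<close>
definition eigen_solution :: "real \<Rightarrow> real \<Rightarrow> real \<Rightarrow> (real \<times> real \<Rightarrow> real) \<Rightarrow> bool" where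
  "eigen_solution m R lam u \<longleftrightarrow>
     (\<exists>U. open U \<and> annulus_polar m R \<subseteq> U \<and> smooth_on U u) \<and>
     (\<forall>r \<theta>. m / 2 \<le> r \<and> r \<le> R \<longrightarrow> u (r, \<theta> + 2 * pi) = u (r, \<theta>)) \<and>
     (\<forall>r \<theta>. m / 2 < r \<and> r < R \<longrightarrow>
        D1 (D1 u) (r, \<theta>) + D1 u (r, \<theta>) / r + D2 (D2 u) (r, \<theta>) / r ^ 2
        + m / (r ^ 3 * (1 + m / (2 * r)) ^ 2) * u (r, \<theta>)
        + lam * (1 + m / (2 * r)) ^ 4 * u (r, \<theta>) = 0) \<and>
     (\<forall>\<theta>. D1 u (m / 2, \<theta>) = 0) \<and>
     (\<forall>\<theta>. u (R, \<theta>) = 0)"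

end

theory Submission
  imports Defs
begin

text \<open>Rotations preserve the problem, so for a solution \<open>u\<close> the difference
  \<open>w = u (r, \<theta> + h) - u (r, \<theta>)\<close> is again a solution, now with mean zero on every circle.
  For such \<open>w\<close> the quantity \<open>E r = r \<integral> w w\<^sub>r d\<theta>\<close> vanishes at both ends of \<open>[m/2, R]\<close> by the
  boundary conditions, while the equation and an integration by parts in \<open>\<theta>\<close> give
  \<open>E' = r \<integral> w\<^sub>r\<^sup>2 + (\<integral> w\<^sub>\<theta>\<^sup>2 - r\<^sup>2 V \<integral> w\<^sup>2) / r\<close> with \<open>V = jacobi_potential m lam\<close>.
  The Poincare inequality \<open>\<integral> w\<^sup>2 \<le> 2 \<integral> w\<^sub>\<theta>\<^sup>2\<close> for mean-zero periodic functions and the bound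
  \<open>r\<^sup>2 V \<le> 1/2\<close> (which needs \<open>lam \<le> 0\<close>) make \<open>E\<close> nondecreasing, hence \<open>E = 0\<close>, \<open>w\<^sub>r = 0\<close> and
  \<open>w = 0\<close>: solutions are radial. A radial solution solves a second order ODE with \<open>u' (m/2) = 0\<close>,
  so a combination of two solutions that vanishes at \<open>r = m/2\<close> has zero Cauchy data and
  vanishes by a Gronwall estimate.\<close>

section \<open>Poincare inequalities\<close>

text \<open>The constant 2 instead of the sharp 1 leaves room for a Riccati weight that stays bounded
  on the closed interval: with \<open>\<psi> t = - b tan (b (t - s - pi/2))\<close> and \<open>b = 1/sqrt 2\<close> one has
  \<open>\<psi>' = -1/2 - \<psi>\<^sup>2\<close>, hence \<open>(g' - g \<psi>)\<^sup>2 + (g\<^sup>2 \<psi>)' = g'\<^sup>2 - g\<^sup>2/2\<close>, and the boundary term vanishes.\<close>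
lemma poincare_Dirichlet_length_pi:
  fixes g g' :: "real \<Rightarrow> real"
  assumes g': "\<And>t. t \<in> {s..s+pi} \<Longrightarrow> (g has_real_derivative g' t) (at t within {s..s+pi})"
    and cont_g': "continuous_on {s..s+pi} g'"
    and "g s = 0" and "g (s+pi) = 0"
  shows "integral {s..s+pi} (\<lambda>t. (g t)\<^sup>2) \<le> 2 * integral {s..s+pi} (\<lambda>t. (g' t)\<^sup>2)"
proof -
  define b :: real where "b = 1 / sqrt 2"
  have b: "b * b = 1/2" "0 < b" "b < 1"
    unfolding b_def by (auto simp flip: power2_eq_square simp: divide_simps)
  define \<phi> where "\<phi> t = b * (t - s - pi/2)" for t
  define \<psi> where "\<psi> t = - b * tan (\<phi> t)" for t
  have cos_pos: "cos (\<phi> t) > 0" if "t \<in> {s..s+pi}" for t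
  proof -
    have "\<bar>t - s - pi/2\<bar> \<le> pi/2" using that by (auto simp: abs_if)
    then have "\<bar>\<phi> t\<bar> \<le> b * (pi/2)" unfolding \<phi>_def using b by (simp add: abs_mult)
    also have "\<dots> < pi/2" using b pi_gt_zero by simp
    finally show ?thesis by (intro cos_gt_zero_pi) auto
  qed
  have \<psi>': "(\<psi> has_real_derivative - 1/2 - (\<psi> t)\<^sup>2) (at t)" if "t \<in> {s..s+pi}" for t
  proof -
    have cz: "cos (\<phi> t) \<noteq> 0" using cos_pos[OF that] by simp
    have d: "(\<psi> has_real_derivative - b * (inverse (cos (\<phi> t) ^ 2) * (b * 1))) (at t)"
      unfolding \<psi>_def \<phi>_def
      by (rule derivative_eq_intros DERIV_tan refl | use cz \<phi>_def in simp)+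
    have "inverse (cos (\<phi> t) ^ 2) = 1 + (tan (\<phi> t))\<^sup>2"
      using cz by (simp add: tan_def field_simps power2_eq_square sin_squared_eq)
    then have "- b * (inverse (cos (\<phi> t) ^ 2) * (b * 1)) = - (b * b) * (1 + (tan (\<phi> t))\<^sup>2)"
      by simp
    also have "\<dots> = - 1/2 - (\<psi> t)\<^sup>2"
      unfolding \<psi>_def using b(1) by (simp add: power2_eq_square algebra_simps)
    finally show ?thesis using d by simp
  qed
  have cont_g: "continuous_on {s..s+pi} g"
    using g' by (intro DERIV_continuous_on) auto
  have cont_\<psi>: "continuous_on {s..s+pi} \<psi>"
    using \<psi>' by (intro DERIV_continuous_on) (auto intro: DERIV_subset)
  define H' where "H' t = 2 * g t * g' t * \<psi> t + (g t)\<^sup>2 * (- 1/2 - (\<psi> t)\<^sup>2)" for t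
  have "(H' has_integral ((g (s+pi))\<^sup>2 * \<psi> (s+pi) - (g s)\<^sup>2 * \<psi> s)) {s..s+pi}"
  proof (rule fundamental_theorem_of_calculus)
    fix t assume t: "t \<in> {s..s+pi}"
    have "((\<lambda>t. (g t)\<^sup>2 * \<psi> t) has_real_derivative H' t) (at t within {s..s+pi})"
      unfolding H'_def
      by (rule derivative_eq_intros g'[OF t] DERIV_subset[OF \<psi>'[OF t]] refl | simp)+
    then show "((\<lambda>t. (g t)\<^sup>2 * \<psi> t) has_vector_derivative H' t) (at t within {s..s+pi})"
      by (simp add: has_real_derivative_iff_has_vector_derivative)
  qed (use pi_gt_zero in simp)
  then have H'_int: "(H' has_integral 0) {s..s+pi}" using assms(3,4) by simp
  define K where "K t = (g' t - g t * \<psi> t)\<^sup>2" for t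
  have K_int: "(K has_integral integral {s..s+pi} K) {s..s+pi}"
    unfolding K_def by (intro integrable_integral integrable_continuous_real continuous_intros
        cont_g' cont_g cont_\<psi>)
  have K_nonneg: "integral {s..s+pi} K \<ge> 0"
    using K_int by (rule has_integral_nonneg) (simp add: K_def)
  have "K t + H' t = (g' t)\<^sup>2 - (g t)\<^sup>2 / 2" for t
    unfolding K_def H'_def by (simp add: algebra_simps power2_eq_square)
  then have "((\<lambda>t. (g' t)\<^sup>2 - (g t)\<^sup>2 / 2) has_integral integral {s..s+pi} K) {s..s+pi}"
    using has_integral_add[OF K_int H'_int] by simp
  moreover have "((\<lambda>t. (g' t)\<^sup>2 - (g t)\<^sup>2 / 2) has_integral
      integral {s..s+pi} (\<lambda>t. (g' t)\<^sup>2) - integral {s..s+pi} (\<lambda>t. (g t)\<^sup>2) / 2) {s..s+pi}"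
    by (intro has_integral_diff has_integral_divide integrable_integral integrable_continuous_real
        continuous_intros cont_g' cont_g)
  ultimately have "integral {s..s+pi} K =
      integral {s..s+pi} (\<lambda>t. (g' t)\<^sup>2) - integral {s..s+pi} (\<lambda>t. (g t)\<^sup>2) / 2"
    by (rule has_integral_unique)
  with K_nonneg show ?thesis by linarith
qed

lemma integral_combine_continuous:
  fixes f :: "real \<Rightarrow> real"
  assumes "continuous_on UNIV f" "a \<le> c" "c \<le> b"
  shows "integral {a..c} f + integral {c..b} f = integral {a..b} f"
  by (rule Henstock_Kurzweil_Integration.integral_combine)
     (use assms in \<open>auto intro: integrable_continuous_real continuous_on_subset\<close>)

lemma integral_periodic_start:
  fixes f :: "real \<Rightarrow> real"
  assumes cont: "continuous_on UNIV f" and periodic: "\<And>x. f (x + p) = f x" and "p \<ge> 0"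
  shows "integral {c..c+p} f = integral {d..d+p} f"
proof -
  define L where "L = min c d - 1"
  define B where "B = max c d + p + 1"
  define I where "I x = integral {L..x} f" for x
  have I': "(I has_real_derivative f x) (at x)" if "L < x" "x < B" for x
  proof -
    have "(I has_real_derivative f x) (at x within {L..B})"
      unfolding I_def using that
      by (intro integral_has_real_derivative continuous_on_subset[OF cont]) auto
    then show ?thesis using at_within_Icc_at[OF that] by simp
  qed
  have difference_const:
    "((\<lambda>s. I (s + p) - I s) has_field_derivative 0) (at s within {min c d..max c d})"
    if "s \<in> {min c d..max c d}" for s
  proof -
    have s: "L < s + p" "s + p < B" "L < s" "s < B"
      using that \<open>p \<ge> 0\<close> by (auto simp: L_def B_def)
    have "((\<lambda>s. I (s + p)) has_real_derivative f (s + p) * 1) (at s)"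
      by (rule DERIV_chain2[where g="\<lambda>s. s + p", OF I'[OF s(1,2)]]) (rule derivative_eq_intros refl | simp)+
    then have "((\<lambda>s. I (s + p) - I s) has_real_derivative f (s + p) * 1 - f s) (at s)"
      by (rule DERIV_diff[OF _ I'[OF s(3,4)]])
    then show ?thesis using periodic[of s] by (simp add: has_field_derivative_at_within)
  qed
  obtain k where k: "\<And>s. s \<in> {min c d..max c d} \<Longrightarrow> I (s + p) - I s = k"
    using has_field_derivative_zero_constant[OF convex_real_interval(5) difference_const] by blast
  have "I (s + p) - I s = integral {s..s+p} f" if "s \<in> {min c d..max c d}" for s
    unfolding I_def using integral_combine_continuous[OF cont, of L s "s + p"] that \<open>p \<ge> 0\<close>
    by (simp add: L_def)
  with k[of c] k[of d] show ?thesis by simp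
qed

lemma integral_periodic_translate_diff:
  fixes g :: "real \<Rightarrow> real"
  assumes cont: "continuous_on UNIV g" and periodic: "\<And>t. g (t + 2*pi) = g t"
  shows "integral {c..c+2*pi} (\<lambda>t. g (t + h) - g t) = 0"
proof -
  have "integral {c..c+2*pi} (\<lambda>t. g (t + h)) = integral {c+h..c+2*pi+h} g"
    using integral_shift_Icc_real[of c "c + 2*pi" g h] by (simp add: o_def add.commute)
  also have "\<dots> = integral {c..c+2*pi} g"
    using integral_periodic_start[OF cont periodic, of "c + h" c] by (simp add: algebra_simps)
  finally show ?thesis
    by (subst integral_diff) (auto intro!: integrable_continuous_real continuous_intros
        continuous_on_compose2[OF cont])
qed

text \<open>Pick \<open>a\<close> with \<open>f a = f (a + pi)\<close> (the function \<open>f t - f (t + pi)\<close> changes sign on a half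
  period) and apply the Dirichlet inequality to \<open>f - f a\<close> on both halves of \<open>[a, a + 2 pi]\<close>;
  the mean-zero condition gives \<open>\<integral> (f - f a)\<^sup>2 = \<integral> f\<^sup>2 + 2 pi (f a)\<^sup>2\<close>.\<close>
lemma poincare_periodic_zero_mean:
  fixes f f' :: "real \<Rightarrow> real"
  assumes f': "\<And>t. (f has_real_derivative f' t) (at t)"
    and cont_f': "continuous_on UNIV f'"
    and periodic: "\<And>t. f (t + 2*pi) = f t"
    and mean: "integral {c..c+2*pi} f = 0"
  shows "integral {c..c+2*pi} (\<lambda>t. (f t)\<^sup>2) \<le> 2 * integral {c..c+2*pi} (\<lambda>t. (f' t)\<^sup>2)"
proof -
  have cont_f: "continuous_on UNIV f" using f' by (intro DERIV_continuous_on) auto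
  have periodic': "f' (t + 2*pi) = f' t" for t
  proof -
    have "((\<lambda>t. f (t + 2*pi)) has_real_derivative f' (t + 2*pi) * 1) (at t)"
      by (rule DERIV_chain2[OF f']) (rule derivative_eq_intros refl | simp)+
    then have "(f has_real_derivative f' (t + 2*pi)) (at t)" using periodic by simp
    then show ?thesis using f' DERIV_unique by blast
  qed
  define g where "g t = f t - f (t + pi)" for t
  have cont_g: "continuous_on {c..c+pi} g" unfolding g_def
    by (intro continuous_intros continuous_on_compose2[OF cont_f]) auto
  have g_flip: "g (c + pi) = - g c" unfolding g_def using periodic[of c]
    by (simp add: add.assoc)
  obtain a where a: "c \<le> a" "a \<le> c + pi" "g a = 0"
  proof (cases "g c \<le> 0")
    case True
    then show ?thesis using IVT'[of g c 0 "c+pi", OF _ _ _ cont_g] g_flip that by auto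
  next
    case False
    then show ?thesis using IVT2'[of g "c+pi" 0 c, OF _ _ _ cont_g] g_flip that by auto
  qed
  define k where "k = f a"
  have k_half: "f (a + pi) = k" using a(3) unfolding g_def k_def by simp
  have k_full: "f (a + pi + pi) = k" using periodic[of a] unfolding k_def by (simp add: add.assoc)
  have f_minus_k': "((\<lambda>t. f t - k) has_real_derivative f' t) (at t within S)" for t S
    by (rule derivative_eq_intros DERIV_subset[OF f'] refl | simp)+
  have cont_on_f': "continuous_on S f'" for S using cont_f' continuous_on_subset by blast
  have first_half:
    "integral {a..a+pi} (\<lambda>t. (f t - k)\<^sup>2) \<le> 2 * integral {a..a+pi} (\<lambda>t. (f' t)\<^sup>2)"
    by (rule poincare_Dirichlet_length_pi[OF f_minus_k' cont_on_f']) (use k_half k_def in auto)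
  have second_half:
    "integral {a+pi..a+pi+pi} (\<lambda>t. (f t - k)\<^sup>2) \<le> 2 * integral {a+pi..a+pi+pi} (\<lambda>t. (f' t)\<^sup>2)"
    by (rule poincare_Dirichlet_length_pi[OF f_minus_k' cont_on_f']) (use k_half k_full in auto)
  have cont_sq: "continuous_on UNIV (\<lambda>t. (f t - k)\<^sup>2)" "continuous_on UNIV (\<lambda>t. (f' t)\<^sup>2)"
      "continuous_on UNIV (\<lambda>t. (f t)\<^sup>2)"
    by (intro continuous_intros cont_f cont_f')+
  have "a + pi + pi = a + 2*pi" by simp
  then have shifted: "integral {a..a+2*pi} (\<lambda>t. (f t - k)\<^sup>2)
      \<le> 2 * integral {a..a+2*pi} (\<lambda>t. (f' t)\<^sup>2)"
    using first_half second_half integral_combine_continuous[OF cont_sq(1), of a "a+pi" "a+2*pi"]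
      integral_combine_continuous[OF cont_sq(2), of a "a+pi" "a+2*pi"]
    by (simp add: algebra_simps)
  have "integral {a..a+2*pi} f = 0"
    using mean integral_periodic_start[OF cont_f periodic, of c a] by simp
  moreover have "f integrable_on {a..a+2*pi}"
    by (rule integrable_continuous_real, rule continuous_on_subset[OF cont_f]) simp
  ultimately have f_int: "(f has_integral 0) {a..a+2*pi}"
    by (metis has_integral_integral)
  have sq_int: "((\<lambda>t. (f t)\<^sup>2) has_integral integral {a..a+2*pi} (\<lambda>t. (f t)\<^sup>2)) {a..a+2*pi}"
    using integrable_continuous_real[OF continuous_on_subset[OF cont_sq(3)]] by blast
  have "((\<lambda>t. (f t)\<^sup>2 - 2*k * f t + k\<^sup>2) has_integral
         (integral {a..a+2*pi} (\<lambda>t. (f t)\<^sup>2) - 2*k*0 + k\<^sup>2 * (2*pi))) {a..a+2*pi}"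
    by (intro has_integral_add has_integral_diff sq_int has_integral_mult_right f_int)
       (use has_integral_const_real[of "k\<^sup>2" a "a+2*pi"] in \<open>simp add: mult_ac\<close>)
  moreover have "(\<lambda>t. (f t)\<^sup>2 - 2*k * f t + k\<^sup>2) = (\<lambda>t. (f t - k)\<^sup>2)"
    by (auto simp: power2_eq_square algebra_simps)
  ultimately have "integral {a..a+2*pi} (\<lambda>t. (f t - k)\<^sup>2)
      = integral {a..a+2*pi} (\<lambda>t. (f t)\<^sup>2) + k\<^sup>2 * (2*pi)"
    by (simp add: integral_unique)
  moreover have "k\<^sup>2 * (2*pi) \<ge> 0" by simp
  ultimately have "integral {a..a+2*pi} (\<lambda>t. (f t)\<^sup>2) \<le> 2 * integral {a..a+2*pi} (\<lambda>t. (f' t)\<^sup>2)"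
    using shifted by linarith
  moreover have "integral {c..c+2*pi} (\<lambda>t. (f t)\<^sup>2) = integral {a..a+2*pi} (\<lambda>t. (f t)\<^sup>2)"
    by (rule integral_periodic_start[OF cont_sq(3)]) (use periodic in auto)
  moreover have "integral {c..c+2*pi} (\<lambda>t. (f' t)\<^sup>2) = integral {a..a+2*pi} (\<lambda>t. (f' t)\<^sup>2)"
    by (rule integral_periodic_start[OF cont_sq(2)]) (use periodic' in auto)
  ultimately show ?thesis by simp
qed

section \<open>Uniqueness for the radial equation\<close>

text \<open>Gronwall: with \<open>M\<close> bounding \<open>\<bar>Q\<bar>\<close>, the energy \<open>z\<^sup>2 + z'\<^sup>2\<close> satisfies \<open>E' \<le> (1 + M) E\<close>.\<close>
lemma radial_ode_unique:
  fixes Q z z' z'' :: "real \<Rightarrow> real"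
  assumes "0 < a"
    and z': "\<And>r. r \<in> {a..b} \<Longrightarrow> (z has_real_derivative z' r) (at r)"
    and z'': "\<And>r. r \<in> {a..b} \<Longrightarrow> (z' has_real_derivative z'' r) (at r)"
    and ode: "\<And>r. a < r \<Longrightarrow> r < b \<Longrightarrow> z'' r + z' r / r + Q r * z r = 0"
    and cont_Q: "continuous_on {a..b} Q"
    and "z a = 0" and "z' a = 0" and r: "r \<in> {a..b}"
  shows "z r = 0"
proof -
  obtain M where M: "\<And>x. x \<in> {a..b} \<Longrightarrow> \<bar>Q x\<bar> \<le> M"
    using compact_imp_bounded[OF compact_continuous_image[OF cont_Q compact_Icc]]
    unfolding bounded_iff by (metis imageI real_norm_def)
  have "M \<ge> 0" using M[of a] r by force
  define C where "C = 1 + M"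
  define E where "E x = (z x)\<^sup>2 + (z' x)\<^sup>2" for x
  define E' where "E' x = 2 * z x * z' x + 2 * z' x * z'' x" for x
  define F where "F x = E x * exp (- C * x)" for x
  have E': "(E has_real_derivative E' x) (at x)" if "x \<in> {a..b}" for x
    unfolding E_def E'_def by (rule derivative_eq_intros z'[OF that] z''[OF that] refl | simp)+
  have F': "(F has_real_derivative (E' x - C * E x) * exp (- C * x)) (at x)"
    if "x \<in> {a..b}" for x
    unfolding F_def by (rule derivative_eq_intros E'[OF that] refl | simp add: algebra_simps)+
  have E'_le: "E' x \<le> C * E x" if x: "a < x" "x < b" for x
  proof -
    have z''_eq: "z'' x = - (z' x / x + Q x * z x)" using ode[OF x] by linarith
    have "E' x = 2 * z x * z' x - 2 * (z' x)\<^sup>2 / x - Q x * (2 * z x * z' x)"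
      unfolding E'_def z''_eq by (simp add: algebra_simps power2_eq_square)
    moreover have "2 * z x * z' x \<le> E x" "\<bar>2 * z x * z' x\<bar> \<le> E x"
      using sum_squares_bound[of "z x" "z' x"] sum_squares_bound[of "- z x" "z' x"]
      unfolding E_def by auto
    moreover have "- (Q x * (2 * z x * z' x)) \<le> M * E x"
      by (rule order_trans[OF abs_ge_minus_self], unfold abs_mult,
          rule mult_mono[OF M]) (use x calculation(3) \<open>M \<ge> 0\<close> in auto)
    moreover have "2 * (z' x)\<^sup>2 / x \<ge> 0" using x \<open>0 < a\<close> by simp
    ultimately show ?thesis unfolding C_def by (simp add: algebra_simps)
  qed
  have "F r \<le> F a"
  proof (rule DERIV_nonpos_imp_decreasing_open[of a r F])
    fix x assume "a < x" "x < r"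
    with r have "x \<in> {a..b}" "(E' x - C * E x) * exp (- C * x) \<le> 0"
      using E'_le[of x] by (auto intro: mult_nonpos_nonneg)
    with F' show "\<exists>y. (F has_real_derivative y) (at x) \<and> y \<le> 0" by blast
  next
    show "continuous_on {a..r} F"
      by (intro continuous_at_imp_continuous_on ballI DERIV_isCont[OF F']) (use r in auto)
  qed (use r in simp)
  moreover have "F a = 0" unfolding F_def E_def using \<open>z a = 0\<close> \<open>z' a = 0\<close> by simp
  ultimately have "E r \<le> 0" unfolding F_def by (simp add: mult_le_0_iff)
  then have "(z r)\<^sup>2 = 0"
    unfolding E_def using zero_le_power2[of "z r"] zero_le_power2[of "z' r"] by linarith
  then show ?thesis by simp
qed

section \<open>Mean-zero solutions on an annulus vanish\<close>

lemma continuous_on_slice: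
  fixes f :: "real \<times> real \<Rightarrow> real"
  assumes "continuous_on ({a..b} \<times> UNIV) f" "x \<in> {a..b}"
  shows "continuous_on S (\<lambda>t. f (x, t))"
  by (rule continuous_on_compose2[OF assms(1)]) (use assms(2) in \<open>auto intro!: continuous_intros\<close>)

definition circle_sq_integral :: "(real \<times> real \<Rightarrow> real) \<Rightarrow> real \<Rightarrow> real \<Rightarrow> real" where
  "circle_sq_integral f c r = integral {c..c+2*pi} (\<lambda>t. (f (r, t))\<^sup>2)"

lemma circle_sq_integral_nonneg:
  assumes "continuous_on ({a..b} \<times> UNIV) f" "r \<in> {a..b}"
  shows "circle_sq_integral f c r \<ge> 0"
  unfolding circle_sq_integral_def
  by (rule integral_nonneg) (auto intro!: integrable_continuous_real continuous_intros
      continuous_on_slice[OF assms])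

lemma has_integral_circle_sq_integral:
  assumes "continuous_on ({a..b} \<times> UNIV) f" "r \<in> {a..b}"
  shows "((\<lambda>t. (f (r, t))\<^sup>2) has_integral circle_sq_integral f c r) {c..c+2*pi}"
  unfolding circle_sq_integral_def
  by (intro integrable_integral integrable_continuous_real continuous_intros
      continuous_on_slice[OF assms])

text \<open>The functions \<open>w1, w11, w2, w22\<close> play the role of \<open>w\<^sub>r, w\<^sub>r\<^sub>r, w\<^sub>\<theta>, w\<^sub>\<theta>\<^sub>\<theta>\<close>.\<close>
locale zero_mean_polar_solution =
  fixes a b :: real and Q :: "real \<Rightarrow> real" and w w1 w11 w2 w22 :: "real \<times> real \<Rightarrow> real"
  assumes a_pos: "0 < a"
    and potential_le: "\<And>r. r \<in> {a..b} \<Longrightarrow> r\<^sup>2 * Q r \<le> 1/2"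
    and cont_w: "continuous_on ({a..b} \<times> UNIV) w"
    and cont_w1: "continuous_on ({a..b} \<times> UNIV) w1"
    and cont_w11: "continuous_on ({a..b} \<times> UNIV) w11"
    and cont_w2: "continuous_on ({a..b} \<times> UNIV) w2"
    and w_r: "\<And>r \<theta>. r \<in> {a..b} \<Longrightarrow> ((\<lambda>t. w (t, \<theta>)) has_real_derivative w1 (r, \<theta>)) (at r within {a..b})"
    and w_rr: "\<And>r \<theta>. r \<in> {a..b} \<Longrightarrow> ((\<lambda>t. w1 (t, \<theta>)) has_real_derivative w11 (r, \<theta>)) (at r within {a..b})"
    and w_\<theta>: "\<And>r \<theta>. r \<in> {a..b} \<Longrightarrow> ((\<lambda>t. w (r, t)) has_real_derivative w2 (r, \<theta>)) (at \<theta>)"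
    and w_\<theta>\<theta>: "\<And>r \<theta>. r \<in> {a..b} \<Longrightarrow> ((\<lambda>t. w2 (r, t)) has_real_derivative w22 (r, \<theta>)) (at \<theta>)"
    and periodic: "\<And>r \<theta>. r \<in> {a..b} \<Longrightarrow> w (r, \<theta> + 2*pi) = w (r, \<theta>)"
    and pde: "\<And>r \<theta>. a < r \<Longrightarrow> r < b \<Longrightarrow>
      w11 (r, \<theta>) + w1 (r, \<theta>) / r + w22 (r, \<theta>) / r\<^sup>2 + Q r * w (r, \<theta>) = 0"
    and neumann: "\<And>\<theta>. w1 (a, \<theta>) = 0"
    and dirichlet: "\<And>\<theta>. w (b, \<theta>) = 0"
    and mean_zero: "\<And>r c. r \<in> {a..b} \<Longrightarrow> integral {c..c+2*pi} (\<lambda>t. w (r, t)) = 0"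
begin

definition energy :: "real \<Rightarrow> real \<Rightarrow> real" where
  "energy c r = r * integral {c..c+2*pi} (\<lambda>t. w (r, t) * w1 (r, t))"

lemma has_derivative_integral_w_w1:
  assumes "x \<in> {a..b}"
  shows "((\<lambda>r. integral {c..c+2*pi} (\<lambda>t. w (r, t) * w1 (r, t))) has_real_derivative
      integral {c..c+2*pi} (\<lambda>t. (w1 (x, t))\<^sup>2 + w (x, t) * w11 (x, t))) (at x within {a..b})"
proof -
  have "((\<lambda>r. integral (cbox c (c+2*pi)) (\<lambda>t. w (r, t) * w1 (r, t))) has_real_derivative
      integral (cbox c (c+2*pi)) (\<lambda>t. (w1 (x, t))\<^sup>2 + w (x, t) * w11 (x, t))) (at x within {a..b})"
  proof (rule leibniz_rule_field_derivative)
    fix y t assume "y \<in> {a..b}"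
    then show "((\<lambda>r. w (r, t) * w1 (r, t)) has_real_derivative (w1 (y, t))\<^sup>2 + w (y, t) * w11 (y, t))
        (at y within {a..b})"
      using DERIV_mult[OF w_r w_rr] by (simp add: power2_eq_square algebra_simps)
  next
    fix y assume "y \<in> {a..b}"
    then show "(\<lambda>t. w (y, t) * w1 (y, t)) integrable_on cbox c (c + 2*pi)"
      by (intro integrable_continuous continuous_intros continuous_on_slice[OF cont_w]
          continuous_on_slice[OF cont_w1])
  next
    have "continuous_on ({a..b} \<times> cbox c (c+2*pi)) (\<lambda>p. (w1 p)\<^sup>2 + w p * w11 p)"
      by (intro continuous_intros continuous_on_subset[OF cont_w] continuous_on_subset[OF cont_w1]
          continuous_on_subset[OF cont_w11]) auto
    then show "continuous_on ({a..b} \<times> cbox c (c + 2*pi))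
        (\<lambda>(r, t). (w1 (r, t))\<^sup>2 + w (r, t) * w11 (r, t))"
      by (simp add: case_prod_beta')
  qed (use assms in auto)
  then show ?thesis by (simp add: cbox_interval)
qed

lemma w2_periodic:
  assumes "x \<in> {a..b}"
  shows "w2 (x, t + 2*pi) = w2 (x, t)"
proof -
  have "((\<lambda>t. w (x, t + 2*pi)) has_real_derivative w2 (x, t + 2*pi) * 1) (at t)"
    by (rule DERIV_chain2[OF w_\<theta>[OF assms]]) (rule derivative_eq_intros refl | simp)+
  then have "((\<lambda>t. w (x, t)) has_real_derivative w2 (x, t + 2*pi)) (at t)"
    using periodic[OF assms] by simp
  then show ?thesis using w_\<theta>[OF assms] DERIV_unique by blast
qed

lemma angular_integration_by_parts:
  assumes "x \<in> {a..b}"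
  shows "((\<lambda>t. (w2 (x, t))\<^sup>2 + w (x, t) * w22 (x, t)) has_integral 0) {c..c+2*pi}"
proof -
  have "((\<lambda>t. (w2 (x, t))\<^sup>2 + w (x, t) * w22 (x, t)) has_integral
      w (x, c+2*pi) * w2 (x, c+2*pi) - w (x, c) * w2 (x, c)) {c..c+2*pi}"
  proof (rule fundamental_theorem_of_calculus)
    fix t
    have "((\<lambda>t. w (x, t) * w2 (x, t)) has_real_derivative (w2 (x, t))\<^sup>2 + w (x, t) * w22 (x, t))
        (at t)"
      using DERIV_mult[OF w_\<theta>[OF assms] w_\<theta>\<theta>[OF assms]] by (simp add: power2_eq_square mult.commute)
    then show "((\<lambda>t. w (x, t) * w2 (x, t)) has_vector_derivative (w2 (x, t))\<^sup>2 + w (x, t) * w22 (x, t))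
        (at t within {c..c+2*pi})"
      by (simp add: has_real_derivative_iff_has_vector_derivative has_vector_derivative_at_within)
  qed simp
  then show ?thesis using periodic[OF assms, of c] w2_periodic[OF assms, of c] by simp
qed

definition energy' :: "real \<Rightarrow> real \<Rightarrow> real" where
  "energy' c r = r * circle_sq_integral w1 c r + circle_sq_integral w2 c r / r
    - r * Q r * circle_sq_integral w c r"

lemma energy_has_derivative:
  assumes "a < x" "x < b"
  shows "(energy c has_real_derivative energy' c x) (at x)"
proof -
  define J where "J = {c..c+2*pi}"
  have x: "x \<in> {a..b}" "x > 0" using assms a_pos by auto
  define A where "A f = circle_sq_integral f c x" for f
  have A: "((\<lambda>t. (f (x, t))\<^sup>2) has_integral A f) J" if "continuous_on ({a..b} \<times> UNIV) f" for f
    unfolding A_def J_def by (rule has_integral_circle_sq_integral[OF that x(1)])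
  have "((\<lambda>t. x * (w1 (x, t))\<^sup>2 + (w2 (x, t))\<^sup>2 / x - x * Q x * (w (x, t))\<^sup>2
       - ((w2 (x, t))\<^sup>2 + w (x, t) * w22 (x, t)) / x) has_integral
      (x * A w1 + A w2 / x - x * Q x * A w - 0 / x)) J"
    unfolding J_def by (intro has_integral_add has_integral_diff has_integral_mult_right
        has_integral_divide A[unfolded J_def] cont_w cont_w1 cont_w2
        angular_integration_by_parts x(1))
  moreover have "x * (w1 (x, t))\<^sup>2 + (w2 (x, t))\<^sup>2 / x - x * Q x * (w (x, t))\<^sup>2
       - ((w2 (x, t))\<^sup>2 + w (x, t) * w22 (x, t)) / x
      = x * ((w1 (x, t))\<^sup>2 + w (x, t) * w11 (x, t)) + w (x, t) * w1 (x, t)" for t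
  proof -
    have w11_eq: "w11 (x, t) = - (w1 (x, t) / x + w22 (x, t) / x\<^sup>2 + Q x * w (x, t))"
      using pde[OF assms, of t] by linarith
    show ?thesis unfolding w11_eq using x(2) by (simp add: field_simps power2_eq_square)
  qed
  ultimately have "((\<lambda>t. x * ((w1 (x, t))\<^sup>2 + w (x, t) * w11 (x, t)) + w (x, t) * w1 (x, t))
      has_integral x * A w1 + A w2 / x - x * Q x * A w) J"
    by simp
  then have "((\<lambda>t. x * ((w1 (x, t))\<^sup>2 + w (x, t) * w11 (x, t)) + w (x, t) * w1 (x, t))
      has_integral energy' c x) J"
    by (simp add: energy'_def A_def)
  moreover have "((\<lambda>t. x * ((w1 (x, t))\<^sup>2 + w (x, t) * w11 (x, t)) + w (x, t) * w1 (x, t))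
      has_integral x * integral J (\<lambda>t. (w1 (x, t))\<^sup>2 + w (x, t) * w11 (x, t))
        + integral J (\<lambda>t. w (x, t) * w1 (x, t))) J"
    unfolding J_def using x(1)
    by (intro has_integral_add has_integral_mult_right integrable_integral integrable_continuous_real
        continuous_intros continuous_on_slice[OF cont_w] continuous_on_slice[OF cont_w1]
        continuous_on_slice[OF cont_w11])
  ultimately have "energy' c x = x * integral J (\<lambda>t. (w1 (x, t))\<^sup>2 + w (x, t) * w11 (x, t))
        + integral J (\<lambda>t. w (x, t) * w1 (x, t))"
    by (rule has_integral_unique)
  moreover have "(energy c has_real_derivative
      x * integral J (\<lambda>t. (w1 (x, t))\<^sup>2 + w (x, t) * w11 (x, t))
      + 1 * integral J (\<lambda>t. w (x, t) * w1 (x, t))) (at x within {a..b})"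
    unfolding energy_def J_def by (rule DERIV_mult'[OF DERIV_ident has_derivative_integral_w_w1[OF x(1)]])
  ultimately show ?thesis using at_within_Icc_at[OF assms] by (simp add: add.commute)
qed

lemma energy'_ge:
  assumes "a < x" "x < b"
  shows "x * circle_sq_integral w1 c x \<le> energy' c x"
proof -
  have x: "x \<in> {a..b}" "x > 0" using assms a_pos by auto
  have "circle_sq_integral w c x \<le> 2 * circle_sq_integral w2 c x"
    unfolding circle_sq_integral_def
    by (rule poincare_periodic_zero_mean[OF w_\<theta>[OF x(1)] continuous_on_slice[OF cont_w2 x(1)]
          periodic[OF x(1)] mean_zero[OF x(1)]])
  moreover have "x\<^sup>2 * Q x * circle_sq_integral w c x \<le> 1/2 * circle_sq_integral w c x"
    by (rule mult_right_mono[OF potential_le[OF x(1)] circle_sq_integral_nonneg[OF cont_w x(1)]])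
  ultimately have "0 \<le> (circle_sq_integral w2 c x - x\<^sup>2 * Q x * circle_sq_integral w c x) / x"
    using x(2) by simp
  also have "\<dots> = circle_sq_integral w2 c x / x - x * Q x * circle_sq_integral w c x"
    using x(2) by (simp add: field_simps power2_eq_square)
  finally show ?thesis unfolding energy'_def by linarith
qed

lemma energy_eq_0:
  assumes "x \<in> {a..b}"
  shows "energy c x = 0"
proof -
  have cont: "continuous_on {a..b} (energy c)"
    unfolding energy_def
    by (intro continuous_intros DERIV_continuous_on[OF has_derivative_integral_w_w1])
  have nonneg: "\<exists>y. (energy c has_real_derivative y) (at r) \<and> 0 \<le> y" if "a < r" "r < b" for r
  proof -
    have "0 \<le> r * circle_sq_integral w1 c r"
      using that a_pos circle_sq_integral_nonneg[OF cont_w1, of r] by simp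
    then show ?thesis
      using energy_has_derivative[OF that, of c] energy'_ge[OF that, of c] by fastforce
  qed
  have "energy c a \<le> energy c x"
    by (rule DERIV_nonneg_imp_increasing_open[OF _ nonneg continuous_on_subset[OF cont]])
      (use assms in auto)
  moreover have "energy c x \<le> energy c b"
    by (rule DERIV_nonneg_imp_increasing_open[OF _ nonneg continuous_on_subset[OF cont]])
      (use assms in auto)
  moreover have "energy c a = 0" "energy c b = 0"
    unfolding energy_def using neumann dirichlet by simp_all
  ultimately show ?thesis by simp
qed

lemma radial_derivative_eq_0:
  assumes "a < x" "x < b"
  shows "w1 (x, c) = 0"
proof -
  have x: "x \<in> {a..b}" "x > 0" using assms a_pos by auto
  have "((\<lambda>_. 0) has_real_derivative energy' c x) (at x)"
    by (rule has_field_derivative_transform_within_open[OF energy_has_derivative[OF assms],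
          of "{a<..<b}"]) (use assms energy_eq_0 in auto)
  then have "energy' c x = 0" using DERIV_const DERIV_unique by blast
  then have "circle_sq_integral w1 c x \<le> 0"
    using energy'_ge[OF assms, of c] x(2) by (simp add: mult_le_0_iff)
  then have "integral {c..c+2*pi} (\<lambda>t. (w1 (x, t))\<^sup>2) = 0"
    using circle_sq_integral_nonneg[OF cont_w1 x(1), where c=c] unfolding circle_sq_integral_def
    by simp
  then have "\<forall>t\<in>{c..c+2*pi}. (w1 (x, t))\<^sup>2 = 0"
    by (subst (asm) integral_eq_0_iff) (auto intro!: continuous_intros continuous_on_slice[OF cont_w1 x(1)])
  then show ?thesis by simp
qed

theorem vanishes:
  assumes "x \<in> {a..b}"
  shows "w (x, \<theta>) = 0"
proof (cases "x = b")
  case True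
  then show ?thesis using dirichlet by simp
next
  case False
  then have "x < b" using assms by simp
  have "w (b, \<theta>) = w (x, \<theta>)"
  proof (rule DERIV_isconst_end[OF \<open>x < b\<close>])
    show "continuous_on {x..b} (\<lambda>r. w (r, \<theta>))"
      using assms by (intro continuous_on_subset[OF DERIV_continuous_on[OF w_r]]) auto
  next
    fix r assume r: "x < r" "r < b"
    then have "a < r" using assms by simp
    with r have "((\<lambda>r. w (r, \<theta>)) has_real_derivative w1 (r, \<theta>)) (at r)"
      using w_r[of r \<theta>] at_within_Icc_at[of a r b] by simp
    then show "((\<lambda>r. w (r, \<theta>)) has_real_derivative 0) (at r)"
      using radial_derivative_eq_0[OF \<open>a < r\<close> r(2)] by simp
  qed
  then show ?thesis using dirichlet by simp
qed

end


section \<open>The eigenvalue problem\<close>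

definition jacobi_potential :: "real \<Rightarrow> real \<Rightarrow> real \<Rightarrow> real" where
  "jacobi_potential m lam r = m / (r ^ 3 * (1 + m / (2 * r)) ^ 2) + lam * (1 + m / (2 * r)) ^ 4"

text \<open>The mass term contributes \<open>4 r m / (2 r + m)\<^sup>2 \<le> 1/2\<close>; this is why the non-sharp constant 2 in
  the Poincare inequality suffices.\<close>
lemma jacobi_potential_le:
  assumes "m > 0" "r \<ge> m / 2" "lam \<le> 0"
  shows "r\<^sup>2 * jacobi_potential m lam r \<le> 1/2"
proof -
  have r: "r > 0" using assms by simp
  define X where "X = (2 * r + m)\<^sup>2"
  have "X > 0" unfolding X_def using r assms by simp
  have "1 + m / (2 * r) = (2 * r + m) / (2 * r)" using r by (simp add: field_simps)
  then have denom: "r ^ 3 * (1 + m / (2 * r)) ^ 2 = r * X / 4"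
    unfolding X_def using r by (simp add: power_divide power2_eq_square power3_eq_cube field_simps)
  have "r\<^sup>2 * (m / (r ^ 3 * (1 + m / (2 * r)) ^ 2)) = r * (4 * r * m) / (r * X)"
    unfolding denom using r \<open>X > 0\<close> by (simp add: field_simps power2_eq_square)
  also have "\<dots> = 4 * r * m / (2 * r + m)\<^sup>2"
    unfolding X_def using r by simp
  also have "\<dots> \<le> 1/2"
    using \<open>X > 0\<close> zero_le_power2[of "2 * r - m"] unfolding X_def
    by (simp add: divide_simps power2_eq_square algebra_simps)
  finally have "r\<^sup>2 * (m / (r ^ 3 * (1 + m / (2 * r)) ^ 2)) \<le> 1/2" .
  moreover have "r\<^sup>2 * (lam * (1 + m / (2 * r)) ^ 4) \<le> 0"
    using assms r by (simp add: mult_nonneg_nonpos mult_nonpos_nonneg)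
  ultimately show ?thesis unfolding jacobi_potential_def by (simp add: distrib_left)
qed

lemma continuous_on_jacobi_potential:
  assumes "m > 0"
  shows "continuous_on {m/2..R} (jacobi_potential m lam)"
proof -
  have "r > 0" "1 + m / (2 * r) > 0" if "r \<in> {m/2..R}" for r
    using that assms by (auto intro: add_pos_pos)
  then show ?thesis
    unfolding jacobi_potential_def
    by (intro continuous_intros) (use assms in \<open>force simp: power_eq_0_iff\<close>)+
qed

lemma has_real_derivative_D1:
  assumes "f differentiable (at (x, y))"
  shows "((\<lambda>t. f (t, y)) has_real_derivative D1 f (x, y)) (at x)"
proof -
  have "(f \<circ> (\<lambda>t. (t, y))) differentiable (at x)"
    by (rule differentiable_chain_at) (use assms in \<open>auto intro!: derivative_intros\<close>)
  then show ?thesis unfolding D1_def by (simp add: o_def DERIV_deriv_iff_real_differentiable)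
qed

lemma has_real_derivative_D2:
  assumes "f differentiable (at (x, y))"
  shows "((\<lambda>t. f (x, t)) has_real_derivative D2 f (x, y)) (at y)"
proof -
  have "(f \<circ> (\<lambda>t. (x, t))) differentiable (at y)"
    by (rule differentiable_chain_at) (use assms in \<open>auto intro!: derivative_intros\<close>)
  then show ?thesis unfolding D2_def by (simp add: o_def DERIV_deriv_iff_real_differentiable)
qed

lemma annulus_polar_eq: "annulus_polar m R = {m/2..R} \<times> UNIV"
  by (auto simp: annulus_polar_def)

lemma eigen_solution_regularity:
  assumes "eigen_solution m R lam u"
  shows "continuous_on ({m/2..R} \<times> UNIV) u" "continuous_on ({m/2..R} \<times> UNIV) (D1 u)"
    "continuous_on ({m/2..R} \<times> UNIV) (D1 (D1 u))" "continuous_on ({m/2..R} \<times> UNIV) (D2 u)"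
    and "\<And>r \<theta>. r \<in> {m/2..R} \<Longrightarrow> ((\<lambda>t. u (t, \<theta>)) has_real_derivative D1 u (r, \<theta>)) (at r)"
    and "\<And>r \<theta>. r \<in> {m/2..R} \<Longrightarrow> ((\<lambda>t. D1 u (t, \<theta>)) has_real_derivative D1 (D1 u) (r, \<theta>)) (at r)"
    and "\<And>r \<theta>. r \<in> {m/2..R} \<Longrightarrow> ((\<lambda>t. u (r, t)) has_real_derivative D2 u (r, \<theta>)) (at \<theta>)"
    and "\<And>r \<theta>. r \<in> {m/2..R} \<Longrightarrow> ((\<lambda>t. D2 u (r, t)) has_real_derivative D2 (D2 u) (r, \<theta>)) (at \<theta>)"
proof -
  obtain U where U: "annulus_polar m R \<subseteq> U" "smooth_on U u"
    using assms unfolding eigen_solution_def by blast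
  have sub: "{m/2..R} \<times> UNIV \<subseteq> U" using U(1) by (simp add: annulus_polar_eq)
  have "Ck_on 2 U u" using U(2) unfolding smooth_on_def by blast
  then have cont: "continuous_on U u" "continuous_on U (D1 u)" "continuous_on U (D1 (D1 u))"
      "continuous_on U (D2 u)"
    and diff: "\<forall>p\<in>U. u differentiable (at p)" "\<forall>p\<in>U. D1 u differentiable (at p)"
      "\<forall>p\<in>U. D2 u differentiable (at p)"
    by (auto simp: numeral_2_eq_2)
  show "continuous_on ({m/2..R} \<times> UNIV) u" "continuous_on ({m/2..R} \<times> UNIV) (D1 u)"
    "continuous_on ({m/2..R} \<times> UNIV) (D1 (D1 u))" "continuous_on ({m/2..R} \<times> UNIV) (D2 u)"
    using cont continuous_on_subset[OF _ sub] by blast+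
  fix r \<theta> assume "r \<in> {m/2..R}"
  then have "(r, \<theta>) \<in> U" using sub by auto
  then show "((\<lambda>t. u (t, \<theta>)) has_real_derivative D1 u (r, \<theta>)) (at r)"
    "((\<lambda>t. D1 u (t, \<theta>)) has_real_derivative D1 (D1 u) (r, \<theta>)) (at r)"
    "((\<lambda>t. u (r, t)) has_real_derivative D2 u (r, \<theta>)) (at \<theta>)"
    "((\<lambda>t. D2 u (r, t)) has_real_derivative D2 (D2 u) (r, \<theta>)) (at \<theta>)"
    using diff by (auto intro!: has_real_derivative_D1 has_real_derivative_D2)
qed

lemma eigen_solution_pde:
  assumes "eigen_solution m R lam u" "m / 2 < r" "r < R"
  shows "D1 (D1 u) (r, \<theta>) + D1 u (r, \<theta>) / r + D2 (D2 u) (r, \<theta>) / r\<^sup>2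
    + jacobi_potential m lam r * u (r, \<theta>) = 0"
  using assms unfolding eigen_solution_def jacobi_potential_def by (simp add: algebra_simps)

definition rotation_difference :: "real \<Rightarrow> (real \<times> real \<Rightarrow> real) \<Rightarrow> real \<times> real \<Rightarrow> real" where
  "rotation_difference h f p = f (fst p, snd p + h) - f p"

lemma continuous_on_rotation_difference:
  assumes "continuous_on ({a..b} \<times> UNIV) f"
  shows "continuous_on ({a..b} \<times> UNIV) (rotation_difference h f)"
proof -
  have "continuous_on ({a..b} \<times> UNIV) (\<lambda>p. f (fst p, snd p + h))"
    by (rule continuous_on_compose2[OF assms]) (auto intro!: continuous_intros)
  then show ?thesis unfolding rotation_difference_def using assms by (intro continuous_intros)
qed

lemma eigen_solution_rotation_invariant:
  assumes m: "m > 0" and "R > m / 2" and lam: "lam \<le> 0"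
    and u: "eigen_solution m R lam u" and r: "r \<in> {m/2..R}"
  shows "u (r, \<theta> + h) = u (r, \<theta>)"
proof -
  note reg = eigen_solution_regularity[OF u]
  have periodic: "\<And>r \<theta>. m / 2 \<le> r \<and> r \<le> R \<Longrightarrow> u (r, \<theta> + 2 * pi) = u (r, \<theta>)"
    and bc: "\<And>\<theta>. D1 u (m / 2, \<theta>) = 0" "\<And>\<theta>. u (R, \<theta>) = 0"
    using u unfolding eigen_solution_def by blast+
  have shift': "((\<lambda>t. f (r, t + h)) has_real_derivative f' (r, \<theta> + h)) (at \<theta>)"
    if "\<And>\<theta>. ((\<lambda>t. f (r, t)) has_real_derivative f' (r, \<theta>)) (at \<theta>)"
    for f f' :: "real \<times> real \<Rightarrow> real" and r \<theta>
  proof -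
    have "((\<lambda>t. f (r, t + h)) has_real_derivative f' (r, \<theta> + h) * 1) (at \<theta>)"
      by (rule DERIV_chain2[where g="\<lambda>t. t + h", OF that]) (rule derivative_eq_intros refl | simp)+
    then show ?thesis by simp
  qed
  interpret zero_mean_polar_solution "m/2" R "jacobi_potential m lam" "rotation_difference h u"
    "rotation_difference h (D1 u)" "rotation_difference h (D1 (D1 u))"
    "rotation_difference h (D2 u)" "rotation_difference h (D2 (D2 u))"
  proof
    show "0 < m/2" using m by simp
    show "r\<^sup>2 * jacobi_potential m lam r \<le> 1/2" if "r \<in> {m/2..R}" for r
      using jacobi_potential_le[OF m _ lam] that by simp
    show "continuous_on ({m/2..R} \<times> UNIV) (rotation_difference h u)"
      "continuous_on ({m/2..R} \<times> UNIV) (rotation_difference h (D1 u))"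
      "continuous_on ({m/2..R} \<times> UNIV) (rotation_difference h (D1 (D1 u)))"
      "continuous_on ({m/2..R} \<times> UNIV) (rotation_difference h (D2 u))"
      using reg(1-4) by (auto intro!: continuous_on_rotation_difference)
  next
    fix r \<theta> assume r: "r \<in> {m/2..R}"
    show "((\<lambda>t. rotation_difference h u (t, \<theta>)) has_real_derivative
        rotation_difference h (D1 u) (r, \<theta>)) (at r within {m/2..R})"
      "((\<lambda>t. rotation_difference h (D1 u) (t, \<theta>)) has_real_derivative
        rotation_difference h (D1 (D1 u)) (r, \<theta>)) (at r within {m/2..R})"
      unfolding rotation_difference_def
      using DERIV_diff[OF reg(5)[OF r, of "\<theta> + h"] reg(5)[OF r, of \<theta>]]
        DERIV_diff[OF reg(6)[OF r, of "\<theta> + h"] reg(6)[OF r, of \<theta>]]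
      by (auto intro: has_field_derivative_at_within)
    show "((\<lambda>t. rotation_difference h u (r, t)) has_real_derivative
        rotation_difference h (D2 u) (r, \<theta>)) (at \<theta>)"
      "((\<lambda>t. rotation_difference h (D2 u) (r, t)) has_real_derivative
        rotation_difference h (D2 (D2 u)) (r, \<theta>)) (at \<theta>)"
      unfolding rotation_difference_def
      using DERIV_diff[OF shift'[OF reg(7)[OF r]] reg(7)[OF r]]
        DERIV_diff[OF shift'[OF reg(8)[OF r]] reg(8)[OF r]]
      by simp_all
    show "rotation_difference h u (r, \<theta> + 2*pi) = rotation_difference h u (r, \<theta>)"
      unfolding rotation_difference_def using periodic[of r "\<theta> + h"] periodic[of r \<theta>] r
      by (simp add: algebra_simps)
    show "integral {\<theta>..\<theta>+2*pi} (\<lambda>t. rotation_difference h u (r, t)) = 0"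
      unfolding rotation_difference_def
      using integral_periodic_translate_diff[OF continuous_on_slice[OF reg(1) r], of \<theta> h]
        periodic[of r] r by simp
  next
    fix r \<theta> assume "m/2 < r" "r < R"
    then show "rotation_difference h (D1 (D1 u)) (r, \<theta>) + rotation_difference h (D1 u) (r, \<theta>) / r
        + rotation_difference h (D2 (D2 u)) (r, \<theta>) / r\<^sup>2
        + jacobi_potential m lam r * rotation_difference h u (r, \<theta>) = 0"
      using eigen_solution_pde[OF u, of r \<theta>] eigen_solution_pde[OF u, of r "\<theta> + h"]
      unfolding rotation_difference_def by (simp add: algebra_simps diff_divide_distrib)
  qed (use bc in \<open>simp_all add: rotation_difference_def\<close>)
  show ?thesis using vanishes[OF r] unfolding rotation_difference_def by simp
qed


lemma eigen_solution_radial_ode: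
  assumes "m > 0" "R > m / 2" "lam \<le> 0" and u: "eigen_solution m R lam u"
    and r: "m / 2 < r" "r < R"
  shows "D1 (D1 u) (r, 0) + D1 u (r, 0) / r + jacobi_potential m lam r * u (r, 0) = 0"
proof -
  have "(\<lambda>t. u (r, t)) = (\<lambda>t. u (r, 0))"
    using eigen_solution_rotation_invariant[OF assms(1-4), of r 0] r by auto
  then have "D2 (D2 u) (r, 0) = 0"
    unfolding D2_def by simp
  then show ?thesis using eigen_solution_pde[OF u r, of 0] by simp
qed

lemma eigen_solution_combination_eq_0:
  assumes "m > 0" "R > m / 2" "lam \<le> 0"
    and u: "eigen_solution m R lam u" and v: "eigen_solution m R lam v"
    and "\<alpha> * u (m/2, 0) + \<beta> * v (m/2, 0) = 0" and r: "r \<in> {m/2..R}"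
  shows "\<alpha> * u (r, \<theta>) + \<beta> * v (r, \<theta>) = 0"
proof -
  note ru = eigen_solution_regularity[OF u] and rv = eigen_solution_regularity[OF v]
  have "D1 u (m/2, 0) = 0" "D1 v (m/2, 0) = 0"
    using u v unfolding eigen_solution_def by blast+
  have "\<alpha> * u (r, 0) + \<beta> * v (r, 0) = 0"
  proof (rule radial_ode_unique[where z="\<lambda>r. \<alpha> * u (r, 0) + \<beta> * v (r, 0)"
        and z'="\<lambda>r. \<alpha> * D1 u (r, 0) + \<beta> * D1 v (r, 0)"
        and z''="\<lambda>r. \<alpha> * D1 (D1 u) (r, 0) + \<beta> * D1 (D1 v) (r, 0)"
        and Q="jacobi_potential m lam"])
    fix x assume x: "x \<in> {m/2..R}"
    show "((\<lambda>r. \<alpha> * u (r, 0) + \<beta> * v (r, 0)) has_real_derivative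
        \<alpha> * D1 u (x, 0) + \<beta> * D1 v (x, 0)) (at x)"
      by (intro DERIV_add DERIV_cmult ru(5)[OF x] rv(5)[OF x])
    show "((\<lambda>r. \<alpha> * D1 u (r, 0) + \<beta> * D1 v (r, 0)) has_real_derivative
        \<alpha> * D1 (D1 u) (x, 0) + \<beta> * D1 (D1 v) (x, 0)) (at x)"
      by (intro DERIV_add DERIV_cmult ru(6)[OF x] rv(6)[OF x])
  next
    fix x assume x: "m/2 < x" "x < R"
    have "\<alpha> * (D1 (D1 u) (x, 0) + D1 u (x, 0) / x + jacobi_potential m lam x * u (x, 0))
        + \<beta> * (D1 (D1 v) (x, 0) + D1 v (x, 0) / x + jacobi_potential m lam x * v (x, 0)) = 0"
      using eigen_solution_radial_ode[OF assms(1-3) u x] eigen_solution_radial_ode[OF assms(1-3) v x]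
      by simp
    then show "\<alpha> * D1 (D1 u) (x, 0) + \<beta> * D1 (D1 v) (x, 0)
        + (\<alpha> * D1 u (x, 0) + \<beta> * D1 v (x, 0)) / x
        + jacobi_potential m lam x * (\<alpha> * u (x, 0) + \<beta> * v (x, 0)) = 0"
      by (simp add: algebra_simps add_divide_distrib)
  qed (use assms \<open>D1 u (m/2, 0) = 0\<close> \<open>D1 v (m/2, 0) = 0\<close> continuous_on_jacobi_potential in auto)
  then show ?thesis
    using eigen_solution_rotation_invariant[OF assms(1-3) u r, of 0 \<theta>]
      eigen_solution_rotation_invariant[OF assms(1-3) v r, of 0 \<theta>] by simp
qed

theorem mainTheorem5:
  fixes m R lam :: real
  assumes "m > 0" and "R > m / 2" and "lam \<le> 0"
  shows "(\<forall>u. eigen_solution m R lam u \<longrightarrow>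
            (\<forall>r \<theta> \<theta>'. m / 2 \<le> r \<and> r \<le> R \<longrightarrow> u (r, \<theta>) = u (r, \<theta>')))
       \<and> (\<forall>u v. eigen_solution m R lam u \<and> eigen_solution m R lam v \<longrightarrow>
            (\<exists>a b. (a, b) \<noteq> (0, 0) \<and>
               (\<forall>r \<theta>. m / 2 \<le> r \<and> r \<le> R \<longrightarrow> a * u (r, \<theta>) + b * v (r, \<theta>) = 0)))"
proof (intro conjI allI impI)
  fix u r \<theta> \<theta>'
  assume "eigen_solution m R lam u" and "m / 2 \<le> r \<and> r \<le> R"
  then show "u (r, \<theta>) = u (r, \<theta>')"
    using eigen_solution_rotation_invariant[OF assms, of u r \<theta> "\<theta>' - \<theta>"] by simp
next
  fix u v assume uv: "eigen_solution m R lam u \<and> eigen_solution m R lam v"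
  obtain a b where ab: "(a, b) \<noteq> (0, 0)" "a * u (m/2, 0) + b * v (m/2, 0) = 0"
  proof (cases "u (m/2, 0) = 0")
    case True
    then show ?thesis using that[of 1 0] by simp
  next
    case False
    then show ?thesis using that[of "v (m/2, 0)" "- u (m/2, 0)"] by simp
  qed
  moreover have "\<forall>r \<theta>. m / 2 \<le> r \<and> r \<le> R \<longrightarrow> a * u (r, \<theta>) + b * v (r, \<theta>) = 0"
    using eigen_solution_combination_eq_0[OF assms, of u v a b] uv ab(2) by simp
  ultimately show "\<exists>a b. (a, b) \<noteq> (0, 0) \<and>
      (\<forall>r \<theta>. m / 2 \<le> r \<and> r \<le> R \<longrightarrow> a * u (r, \<theta>) + b * v (r, \<theta>) = 0)"
    by blast
qed

end
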